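(* Let $K\ge1$ and fix $a_2,\dots,a_{K+1}\ge0$. For $x\ge0$ let $G(x)=P^{(1)}_{K+1}(x,a_2,\dots,a_{K+1})$ (path $v_0,\dots,v_{K+1}$). Let $\mathcal A_\theta$ be an $L$-layer MinAgg GNN with exactly $K$ message passing layers $\ell_1<\dots<\ell_K$. If for some $k\in[K]$ and some set $D\subseteq[0,\infty)$ the map $x\mapsto h^{(\ell_k)}_{v_{k+1}}(G(x))$ is constant on $D$, then $x\mapsto h^{(L)}_{v_{K+1}}(G(x))$ is also constant on $D$.
   Context: Attributed graphs have nonnegative edge weights and node features, a self-loop of weight $0$ at each node, and $\mathcal N(v)=\{v\}\cup\{u:\{u,v\}\in E\}$. A large constant $\beta>0$ encodes "infinite distance". For a source $s$, $\mathrm d^{(t)}(s,v)$ is the minimal weight of a walk from $s$ to $v$ with at most $t$ edges ($\beta$ if none). $P^{(t)}_k(a_1,\dots,a_k)$: path $v_0,\dots,v_k$, edge $\{v_{i-1},v_i\}$ of weight $a_i$, features $x_{v_i}=\mathrm d^{(t)}(v_0,v_i)$; in particular $P^{(1)}_{K+1}(x,a_2,\dots)$ has $x_{v_0}=0$, $x_{v_1}=x$, $x_{v_i}=\beta$ for $i\ge2$. MinAgg GNN: for each $\ell\in[L]$, ReLU MLPs ($x^{(j)}=\sigma(W_jx^{(j-1)}+b_j)$) $f^{\mathrm{agg},(\ell)}:\mathbb R^{d_{\ell-1}+1}\to\mathbb R^d$ and $f^{\mathrm{up},(\ell)}:\mathbb R^{d+d_{\ell-1}}\to\mathbb R^{d_\ell}$,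 $d_0=d_L=1$, $d_\ell=d$ otherwise; $h^{(0)}_v=x_v$, $h^{(\ell)}_v=f^{\mathrm{up},(\ell)}\big(\min_{u\in\mathcal N(v)}f^{\mathrm{agg},(\ell)}(h^{(\ell-1)}_u\oplus x_{(u,v)})\oplus h^{(\ell-1)}_v\big)$ (coordinatewise min, $\oplus$ concatenation). Node component of $f^{\mathrm{agg},(\ell)}$: its first $d_{\ell-1}$ input coordinates. A function on $\mathbb R^n_{\ge0}$ depends on a set $S$ of coordinates if some $x\ne y$ agreeing outside $S$ have different images. Layer $\ell$ is message passing if $f^{\mathrm{agg},(\ell)}$ depends on its node component, stationary otherwise. *)

theory Defs
  imports "HOL-Analysis.Analysis"
begin

text \<open>Vectors in R^n are real lists of length n. An MLP is a nonempty list of layers (W_j, b_j),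
  W_j given as list of rows; each layer computes x |-> relu(W_j x + b_j) coordinatewise.\<close>

type_synonym mlp = "(real list list \<times> real list) list"

definition relu :: "real \<Rightarrow> real" where
  "relu t = max 0 t"

definition mlp_layer :: "real list list \<times> real list \<Rightarrow> real list \<Rightarrow> real list" where
  "mlp_layer Wb x = map2 (\<lambda>row bi. relu (sum_list (map2 (*) row x) + bi)) (fst Wb) (snd Wb)"

definition mlp_eval :: "mlp \<Rightarrow> real list \<Rightarrow> real list" where
  "mlp_eval Ls x = fold mlp_layer Ls x"

primrec layers_wf :: "nat \<Rightarrow> nat \<Rightarrow> mlp \<Rightarrow> bool" where
  "layers_wf n m [] = (n = m)"
| "layers_wf n m (Wb # Ls) =
     (length (snd Wb) = length (fst Wb) \<and> (\<forall>row\<in>set (fst Wb). length row = n)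
      \<and> layers_wf (length (fst Wb)) m Ls)"

definition mlp_wf :: "nat \<Rightarrow> nat \<Rightarrow> mlp \<Rightarrow> bool" where
  "mlp_wf n m Ls = (Ls \<noteq> [] \<and> layers_wf n m Ls)"

definition depends_on :: "nat \<Rightarrow> (real list \<Rightarrow> real list) \<Rightarrow> nat set \<Rightarrow> bool" where
  "depends_on n f S = (\<exists>x y. length x = n \<and> length y = n \<and>
      (\<forall>i<n. 0 \<le> x ! i \<and> 0 \<le> y ! i) \<and> x \<noteq> y \<and>
      (\<forall>i<n. i \<notin> S \<longrightarrow> x ! i = y ! i) \<and> f x \<noteq> f y)"

definition layer_dim :: "nat \<Rightarrow> nat \<Rightarrow> nat \<Rightarrow> nat" where
  "layer_dim L d l = (if l = 0 \<or> l = L then 1 else d)"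

definition cmin :: "nat \<Rightarrow> real list set \<Rightarrow> real list" where
  "cmin d S = map (\<lambda>i. Min ((\<lambda>y. y ! i) ` S)) [0..<d]"

text \<open>Node embeddings h^(l)_v of a MinAgg GNN with aggregation MLPs fa l and update MLPs fu l
  (hidden dimension d), on a graph given by neighbourhoods N v (including v itself),
  edge features w u v (w v v = 0 for the self-loop) and node features x.\<close>
primrec gnn :: "nat \<Rightarrow> (nat \<Rightarrow> mlp) \<Rightarrow> (nat \<Rightarrow> mlp) \<Rightarrow> (nat \<Rightarrow> nat set)
    \<Rightarrow> (nat \<Rightarrow> nat \<Rightarrow> real) \<Rightarrow> (nat \<Rightarrow> real) \<Rightarrow> nat \<Rightarrow> nat \<Rightarrow> real list" where
  "gnn d fa fu N w x 0 = (\<lambda>v. [x v])"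
| "gnn d fa fu N w x (Suc l) =
     (let H = gnn d fa fu N w x l in
      (\<lambda>v. mlp_eval (fu (Suc l))
             (cmin d ((\<lambda>u. mlp_eval (fa (Suc l)) (H u @ [w u v])) ` N v) @ H v)))"

text \<open>Layer l is message passing iff its aggregation MLP depends on its node component
  (the first d_{l-1} input coordinates).\<close>
definition message_passing :: "nat \<Rightarrow> nat \<Rightarrow> (nat \<Rightarrow> mlp) \<Rightarrow> nat \<Rightarrow> bool" where
  "message_passing L d fa l =
     depends_on (layer_dim L d (l - 1) + 1) (mlp_eval (fa l)) {0..<layer_dim L d (l - 1)}"

text \<open>Nodes v_0..v_{K+1} are 0..K+1.\<close>
definition path_nbrs :: "nat \<Rightarrow> nat \<Rightarrow> nat set" where
  "path_nbrs K v = {v} \<union> {u. u \<le> K + 1 \<and> v \<le> K + 1 \<and> (u = v + 1 \<or> v = u + 1)}"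

text \<open>Edge {v_{i-1}, v_i} has weight a_i; self-loops have weight 0.\<close>
definition path_weight :: "(nat \<Rightarrow> real) \<Rightarrow> nat \<Rightarrow> nat \<Rightarrow> real" where
  "path_weight a u v = (if u = v then 0 else a (max u v))"

text \<open>Features d^(1)(v_0, v_i): 0 at v_0, x at v_1, beta elsewhere.\<close>
definition path_feat :: "real \<Rightarrow> real \<Rightarrow> nat \<Rightarrow> real" where
  "path_feat \<beta> x v = (if v = 0 then 0 else if v = 1 then x else \<beta>)"

definition path_gnn :: "nat \<Rightarrow> real \<Rightarrow> (nat \<Rightarrow> real) \<Rightarrow> nat \<Rightarrow> (nat \<Rightarrow> mlp) \<Rightarrow> (nat \<Rightarrow> mlp)
    \<Rightarrow> real \<Rightarrow> nat \<Rightarrow> nat \<Rightarrow> real list" where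
  "path_gnn K \<beta> a d fa fu x l v =
     gnn d fa fu (path_nbrs K) (path_weight (a(1 := x))) (path_feat \<beta> x) l v"

end

theory Submission
  imports Defs
begin

text \<open>Only the feature of v_1 and the weight of the edge v_0 v_1 depend on x, so initially the
  embeddings of v_2, v_3, ... do not depend on x \<in> D. A stationary layer ignores the neighbours'
  embeddings (nonnegative, as every MLP ends with a ReLU) and sees only edge weights independent
  of x, so it preserves this frontier; a message passing layer pushes it one node to the right.
  After layer l_k the frontier is at v_(k+2), and the hypothesis moves it to v_(k+1); the
  remaining K - k message passing layers then bring it to v_(K+1).\<close>

lemma length_mlp_layer: "length (mlp_layer Wb x) = min (length (fst Wb)) (length (snd Wb))"
  by (simp add: mlp_layer_def)

lemma length_fold_mlp_layer:
  "layers_wf n m Ls \<Longrightarrow> length x = n \<Longrightarrow> length (fold mlp_layer Ls x) = m"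
  by (induction Ls arbitrary: n x) (auto simp: length_mlp_layer)

lemma mlp_layer_nonneg: "z \<in> set (mlp_layer Wb x) \<Longrightarrow> 0 \<le> z"
  by (auto simp: mlp_layer_def relu_def set_zip)

lemma fold_mlp_layer_nonneg: "Ls \<noteq> [] \<Longrightarrow> z \<in> set (fold mlp_layer Ls x) \<Longrightarrow> 0 \<le> z"
proof (induction Ls arbitrary: x)
  case (Cons Wb Ls)
  then show ?case
    by (cases "Ls = []") (auto intro: mlp_layer_nonneg)
qed simp

lemma mlp_eval_length: "mlp_wf n m Ls \<Longrightarrow> length x = n \<Longrightarrow> length (mlp_eval Ls x) = m"
  unfolding mlp_wf_def mlp_eval_def using length_fold_mlp_layer by blast

lemma mlp_eval_nonneg: "mlp_wf n m Ls \<Longrightarrow> z \<in> set (mlp_eval Ls x) \<Longrightarrow> 0 \<le> z"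
  by (auto simp: mlp_wf_def mlp_eval_def intro: fold_mlp_layer_nonneg)

lemma stationary_agg_ignores_node:
  assumes "\<not> message_passing L d fa l"
    and "length p = layer_dim L d (l - 1)" "length q = layer_dim L d (l - 1)"
    and "\<forall>z\<in>set p. 0 \<le> z" "\<forall>z\<in>set q. 0 \<le> z" "0 \<le> e"
  shows "mlp_eval (fa l) (p @ [e]) = mlp_eval (fa l) (q @ [e])"
proof (rule ccontr)
  assume "mlp_eval (fa l) (p @ [e]) \<noteq> mlp_eval (fa l) (q @ [e])"
  then have "depends_on (layer_dim L d (l - 1) + 1) (mlp_eval (fa l)) {0..<layer_dim L d (l - 1)}"
    unfolding depends_on_def using assms(2-)
    by (intro exI[of _ "p @ [e]"] exI[of _ "q @ [e]"])
       (auto simp: nth_append less_Suc_eq)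
  with assms(1) show False
    by (simp add: message_passing_def)
qed

lemma path_weight_fun_upd_1: "2 \<le> v \<Longrightarrow> path_weight (a(1 := x)) u v = path_weight a u v"
  by (simp add: path_weight_def max_def)

lemma path_nbrs_ge: "u \<in> path_nbrs K v \<Longrightarrow> v - 1 \<le> u"
  by (auto simp: path_nbrs_def)

lemma card_strict_mono_on_image_Int_atMost:
  fixes f :: "nat \<Rightarrow> 'b::linorder"
  assumes "strict_mono_on {1..n} f" "k \<in> {1..n}"
  shows "card (f ` {1..n} \<inter> {..f k}) = k"
proof -
  have "f ` {1..n} \<inter> {..f k} = f ` {1..k}"
    using strict_mono_on_less_eq[OF assms(1) _ assms(2)] assms(2) by auto
  moreover have "inj_on f {1..k}"
    using strict_mono_on_imp_inj_on[OF assms(1)] assms(2) by (auto intro: inj_on_subset)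
  ultimately show ?thesis
    by (simp add: card_image)
qed

lemma card_strict_mono_on_image_Int_greaterThan:
  fixes f :: "nat \<Rightarrow> 'b::linorder"
  assumes "strict_mono_on {1..n} f" "k \<in> {1..n}"
  shows "card (f ` {1..n} \<inter> {f k<..}) = n - k"
proof -
  have "f ` {1..n} \<inter> {f k<..} = f ` {k<..n}"
    using strict_mono_on_less[OF assms(1) assms(2)] assms(2) by auto
  moreover have "inj_on f {k<..n}"
    using strict_mono_on_imp_inj_on[OF assms(1)] assms(2) by (auto intro: inj_on_subset)
  ultimately show ?thesis
    by (simp add: card_image)
qed

locale minagg_path =
  fixes K L d :: nat and \<beta> :: real and a :: "nat \<Rightarrow> real" and fa fu :: "nat \<Rightarrow> mlp"
  assumes beta_nonneg: "0 \<le> \<beta>"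
    and weights_nonneg: "\<forall>i\<in>{2..K+1}. a i \<ge> 0"
    and mlps_wf: "\<forall>l\<in>{1..L}. mlp_wf (layer_dim L d (l - 1) + 1) d (fa l)
                    \<and> mlp_wf (d + layer_dim L d (l - 1)) (layer_dim L d l) (fu l)"
begin

abbreviation h :: "real \<Rightarrow> nat \<Rightarrow> nat \<Rightarrow> real list" where
  "h \<equiv> path_gnn K \<beta> a d fa fu"

definition agree_from :: "real set \<Rightarrow> nat \<Rightarrow> nat \<Rightarrow> bool" where
  "agree_from D l m \<longleftrightarrow> (\<forall>v\<ge>m. \<forall>x\<in>D. \<forall>y\<in>D. h x l v = h y l v)"

lemma h_Suc:
  "h x (Suc l) v = mlp_eval (fu (Suc l))
     (cmin d ((\<lambda>u. mlp_eval (fa (Suc l)) (h x l u @ [path_weight (a(1:=x)) u v])) ` path_nbrs K v)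
      @ h x l v)"
  by (simp add: path_gnn_def Let_def)

lemma h_length_nonneg:
  assumes "l \<le> L" "0 \<le> x"
  shows "length (h x l v) = layer_dim L d l \<and> (\<forall>z\<in>set (h x l v). 0 \<le> z)"
  using assms(1)
proof (induction l arbitrary: v)
  case 0
  then show ?case
    using assms(2) beta_nonneg by (simp add: path_gnn_def path_feat_def layer_dim_def)
next
  case (Suc l)
  then have "mlp_wf (d + layer_dim L d l) (layer_dim L d (Suc l)) (fu (Suc l))"
    using mlps_wf by force
  with Suc show ?case
    unfolding h_Suc by (auto simp: cmin_def mlp_eval_length intro: mlp_eval_nonneg)
qed

lemma agree_from_0: "agree_from D 0 2"
  by (auto simp: agree_from_def path_gnn_def path_feat_def)

lemma agree_from_extend:
  assumes "agree_from D l (Suc m)" "\<exists>c. \<forall>x\<in>D. h x l m = c"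
  shows "agree_from D l m"
  using assms unfolding agree_from_def by (metis le_antisym not_less_eq_eq)

lemma agree_from_imp_constant:
  assumes "agree_from D l m"
  shows "\<exists>c. \<forall>x\<in>D. h x l m = c"
proof (cases "D = {}")
  case False
  then obtain x0 where "x0 \<in> D"
    by blast
  with assms show ?thesis
    unfolding agree_from_def by blast
qed simp

lemma agree_from_Suc_stationary:
  assumes "Suc l \<le> L" "2 \<le> m" "D \<subseteq> {0..}" "agree_from D l m"
    and "\<not> message_passing L d fa (Suc l)"
  shows "agree_from D (Suc l) m"
  unfolding agree_from_def
proof (intro allI impI ballI)
  fix v x y assume v: "m \<le> v" and x: "x \<in> D" and y: "y \<in> D"
  have "mlp_eval (fa (Suc l)) (h x l u @ [path_weight (a(1:=x)) u v])
      = mlp_eval (fa (Suc l)) (h y l u @ [path_weight (a(1:=y)) u v])"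
    if u: "u \<in> path_nbrs K v" for u
  proof -
    have "0 \<le> path_weight a u v"
      using u v assms(2) weights_nonneg by (auto simp: path_weight_def path_nbrs_def max_def)
    moreover have "length (h z l u) = layer_dim L d (Suc l - 1) \<and> (\<forall>t\<in>set (h z l u). 0 \<le> t)"
      if "z \<in> D" for z
      using that assms(1,3) h_length_nonneg[of l z u] by auto
    ultimately have "mlp_eval (fa (Suc l)) (h x l u @ [path_weight a u v])
        = mlp_eval (fa (Suc l)) (h y l u @ [path_weight a u v])"
      using x y stationary_agg_ignores_node[OF assms(5)] by blast
    moreover have "2 \<le> v"
      using v assms(2) by simp
    ultimately show ?thesis
      by (simp only: path_weight_fun_upd_1)
  qed
  moreover have "h x l v = h y l v"
    using assms(4) v x y unfolding agree_from_def by blast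
  ultimately show "h x (Suc l) v = h y (Suc l) v"
    unfolding h_Suc by (simp cong: image_cong)
qed

lemma agree_from_Suc_message_passing:
  assumes "2 \<le> m" "agree_from D l m"
  shows "agree_from D (Suc l) (Suc m)"
  unfolding agree_from_def
proof (intro allI impI ballI)
  fix v x y assume v: "Suc m \<le> v" and x: "x \<in> D" and y: "y \<in> D"
  then have "2 \<le> v"
    using assms(1) by simp
  have "h x l u = h y l u" if "u \<in> path_nbrs K v" for u
  proof -
    have "m \<le> u"
      using path_nbrs_ge[OF that] v by simp
    then show ?thesis
      using assms(2) x y unfolding agree_from_def by blast
  qed
  then have "mlp_eval (fa (Suc l)) (h x l u @ [path_weight (a(1:=x)) u v])
      = mlp_eval (fa (Suc l)) (h y l u @ [path_weight (a(1:=y)) u v])"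
    if "u \<in> path_nbrs K v" for u
    using that by (simp only: path_weight_fun_upd_1[OF \<open>2 \<le> v\<close>])
  moreover have "h x l v = h y l v"
    using assms(2) v x y unfolding agree_from_def by (meson Suc_leD)
  ultimately show "h x (Suc l) v = h y (Suc l) v"
    unfolding h_Suc by (simp cong: image_cong)
qed

lemma agree_from_propagate:
  assumes "l0 \<le> l" "l \<le> L" "2 \<le> m" "D \<subseteq> {0..}" "agree_from D l0 m"
  shows "agree_from D l (m + card {l'\<in>{l0<..l}. message_passing L d fa l'})"
  using assms(1,2)
proof (induction l rule: dec_induct)
  case base
  then show ?case using assms(5) by simp
next
  case (step n)
  have split: "{l'\<in>{l0<..Suc n}. message_passing L d fa l'}
      = (if message_passing L d fa (Suc n) then insert (Suc n) else id)
          {l'\<in>{l0<..n}. message_passing L d fa l'}"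
    using step.hyps(1) by (auto simp: le_Suc_eq)
  show ?case
  proof (cases "message_passing L d fa (Suc n)")
    case True
    then show ?thesis
      using step assms(3) unfolding split by (simp add: agree_from_Suc_message_passing)
  next
    case False
    then show ?thesis
      using step assms(3,4) unfolding split by (simp add: agree_from_Suc_stationary)
  qed
qed

end

theorem mainTheorem11:
  fixes K L d k :: nat and \<beta> :: real and a :: "nat \<Rightarrow> real"
    and fa fu :: "nat \<Rightarrow> mlp" and ls :: "nat \<Rightarrow> nat" and D :: "real set"
  assumes "K \<ge> 1" and "d \<ge> 1" and "\<beta> > 0"
    and "\<forall>i\<in>{2..K+1}. a i \<ge> 0"
    and "\<forall>l\<in>{1..L}. mlp_wf (layer_dim L d (l - 1) + 1) d (fa l)
                    \<and> mlp_wf (d + layer_dim L d (l - 1)) (layer_dim L d l) (fu l)"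
    and "strict_mono_on {1..K} ls"
    and "{l\<in>{1..L}. message_passing L d fa l} = ls ` {1..K}"
    and "k \<in> {1..K}" and "D \<subseteq> {0..}"
    and "\<exists>c. \<forall>x\<in>D. path_gnn K \<beta> a d fa fu x (ls k) (k + 1) = c"
  shows "\<exists>c. \<forall>x\<in>D. path_gnn K \<beta> a d fa fu x L (K + 1) = c"
proof -
  interpret minagg_path K L d \<beta> a fa fu
    using assms(3-5) by unfold_locales auto
  have k: "1 \<le> k" "k \<le> K"
    using assms(8) by simp_all
  have lk: "1 \<le> ls k" "ls k \<le> L"
    using assms(7,8) by auto
  have "{l\<in>{0<..ls k}. message_passing L d fa l} = ls ` {1..K} \<inter> {..ls k}"
    using assms(7) lk by auto
  then have "card {l\<in>{0<..ls k}. message_passing L d fa l} = k"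
    using card_strict_mono_on_image_Int_atMost[OF assms(6,8)] by simp
  then have "agree_from D (ls k) (k + 2)"
    using agree_from_propagate[OF le0 lk(2) order.refl assms(9) agree_from_0]
    by (simp add: add.commute)
  then have agree_lk: "agree_from D (ls k) (k + 1)"
    using assms(10) by (simp add: agree_from_extend)
  have "{l\<in>{ls k<..L}. message_passing L d fa l} = ls ` {1..K} \<inter> {ls k<..}"
    using assms(7) by auto
  then have "card {l\<in>{ls k<..L}. message_passing L d fa l} = K - k"
    using card_strict_mono_on_image_Int_greaterThan[OF assms(6,8)] by simp
  moreover have "agree_from D L (k + 1 + card {l\<in>{ls k<..L}. message_passing L d fa l})"
    using k(1) by (intro agree_from_propagate[OF lk(2) order.refl _ assms(9) agree_lk]) simp
  ultimately have "agree_from D L (K + 1)"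
    using k(2) by simp
  then show ?thesis
    by (rule agree_from_imp_constant)
qed

end
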